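(* If $(g(z),f(z))$ is a Riordan matrix that is a pseudo-involution, then for every positive integer $n$ the Riordan matrix $(g(z)^n, f(z))$ is also a pseudo-involution.
   Context: A Riordan matrix is a pair $(g(z),f(z))$ of formal power series over $\mathbb{C}$ with $g(z)=\sum_{n\ge 0} g_n z^n$, $g_0\neq 0$, and $f(z)=\sum_{n\ge 1} f_n z^n$ with $f_1\neq 0$; it represents the infinite lower-triangular matrix whose $k$-th column ($k\ge 0$) has generating function $g(z)f(z)^k$. Riordan matrices form a group under matrix multiplication, where $(g(z),f(z))*(h(z),l(z))=(g(z)h(f(z)),\,l(f(z)))$ and the identity is $(1,z)$. Let $M=(1,-z)$. A Riordan matrix $L$ is called a pseudo-involution if $(L*M)*(L*M)=(1,z)$. *)

theory Defs
  imports "HOL-Computational_Algebra.Formal_Power_Series" Complex_Main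
begin

type_synonym riordan = "complex fps \<times> complex fps"

definition is_riordan :: "riordan \<Rightarrow> bool" where
  "is_riordan L \<longleftrightarrow> fps_nth (fst L) 0 \<noteq> 0 \<and> fps_nth (snd L) 0 = 0 \<and> fps_nth (snd L) 1 \<noteq> 0"

definition riordan_mult :: "riordan \<Rightarrow> riordan \<Rightarrow> riordan" where
  "riordan_mult L K = (fst L * (fst K oo snd L), snd K oo snd L)"

definition riordan_id :: riordan where
  "riordan_id = (1, fps_X)"

definition riordan_M :: riordan where
  "riordan_M = (1, - fps_X)"

definition pseudo_involution :: "riordan \<Rightarrow> bool" where
  "pseudo_involution L \<longleftrightarrow> is_riordan L \<and>
     riordan_mult (riordan_mult L riordan_M) (riordan_mult L riordan_M) = riordan_id"

end

theory Submission
  imports Defs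
begin

text \<open>Since \<open>(- z) \<circ> f = - f\<close>, the Riordan matrix \<open>(g, f)\<close> is a pseudo-involution exactly when
  \<open>g(z) g(-f(z)) = 1\<close> and \<open>-f\<close> is a compositional involution. The second condition does not
  involve \<open>g\<close>, and the first is preserved under taking powers of \<open>g\<close> because composition with
  \<open>-f\<close> is multiplicative.\<close>

lemma is_riordan_power_fst:
  "is_riordan (g, f) \<Longrightarrow> is_riordan (g ^ n, f)"
  by (simp add: is_riordan_def fps_nth_power_0)

lemma pseudo_involution_iff:
  fixes g f :: "complex fps"
  assumes "is_riordan (g, f)"
  shows "pseudo_involution (g, f) \<longleftrightarrow> g * (g oo - f) = 1 \<and> (- f) oo (- f) = fps_X"
proof -
  have "(- fps_X) oo f = - f"
    using assms by (simp add: fps_compose_uminus is_riordan_def)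
  then show ?thesis
    using assms by (simp add: pseudo_involution_def riordan_mult_def riordan_M_def riordan_id_def)
qed

lemma power_mult_power_compose:
  fixes g h :: "'a::idom fps"
  assumes "fps_nth h 0 = 0"
  shows "g ^ n * (g ^ n oo h) = (g * (g oo h)) ^ n"
  by (simp add: fps_compose_power[OF assms, symmetric] power_mult_distrib)

theorem proposition24:
  fixes g f :: "complex fps" and n :: nat
  assumes "pseudo_involution (g, f)" and "n \<ge> 1"
  shows "pseudo_involution (g ^ n, f)"
proof -
  have riordan: "is_riordan (g, f)"
    using assms(1) by (simp add: pseudo_involution_def)
  then have "fps_nth (- f) 0 = 0"
    by (simp add: is_riordan_def)
  moreover have "g * (g oo - f) = 1" and "(- f) oo (- f) = fps_X"
    using assms(1) pseudo_involution_iff[OF riordan] by auto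
  ultimately have "g ^ n * (g ^ n oo - f) = 1"
    by (simp add: power_mult_power_compose)
  then show ?thesis
    using pseudo_involution_iff[OF is_riordan_power_fst[OF riordan]] \<open>(- f) oo (- f) = fps_X\<close>
    by simp
qed

end
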